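(* Let $n\ge 2$, $k\ge 1$, and let $f_i(x)=\frac12 a_ix^2-b_ix$ ($i=1,\dots,n$) be univariate functions satisfying Assumption (B) with parameters $\lambda,L,G$, where $F(x)=\frac1n\sum_{i=1}^n f_i(x)=\frac{\lambda}{2}x^2-bx$. Assume $\frac{L}{\lambda}\le \frac{nk}{\log(n^{1/2}k)}$. Then SGD with single shuffling, run for $k$ epochs from an arbitrary $x_0\in\mathbb{R}$ with constant step size $\eta=\frac{\log(n^{1/2}k)}{\lambda nk}$, satisfies \[ \mathbb{E}\Big[F(x_k)-\inf_xF(x)\Big]\;\le\;\tilde{O}\left(\frac{\lambda}{nk^2}(x_0-x^* )^2+\frac{G^2L^2}{\lambda^3nk^2}\right), \] where $x^*=\arg\min_x F(x)$, the expectation is over the uniformly random permutation, and $\tilde O(\cdot)$ hides a universal multiplicative constant and factors polylogarithmic in $n$ and $k$.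
   Context: Assumption (B) (parameters $\lambda,L,G>0$): $F(x)=\frac1n\sum_{i=1}^nf_i(x)$ is $\lambda$-strongly convex on $\mathbb{R}$; each $f_i(x)=\frac{a_i}{2}x^2-b_ix$ is convex (i.e. $a_i\ge 0$), has $L$-Lipschitz derivative (i.e. $a_i\le L$), and satisfies $|f_i'(x^* )|\le G$ where $x^*=\arg\min_xF(x)$. SGD with single shuffling: one uniformly random permutation $\sigma$ of $\{1,\dots,n\}$ is drawn once; then for each of $k$ epochs, perform the updates $x\leftarrow x-\eta f_{\sigma(j)}'(x)$ for $j=1,\dots,n$ in order; $x_t$ is the iterate at the end of epoch $t$. *)

theory Defs
  imports "HOL-Analysis.Analysis" "HOL-Combinatorics.Permutations"
begin

definition F_obj :: "nat \<Rightarrow> (nat \<Rightarrow> real) \<Rightarrow> (nat \<Rightarrow> real) \<Rightarrow> real \<Rightarrow> real" where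
  "F_obj n a b x = (1 / real n) * (\<Sum>i<n. a i / 2 * x^2 - b i * x)"

definition sgd_epoch :: "nat \<Rightarrow> (nat \<Rightarrow> real) \<Rightarrow> (nat \<Rightarrow> real) \<Rightarrow> real \<Rightarrow> (nat \<Rightarrow> nat) \<Rightarrow> real \<Rightarrow> real" where
  "sgd_epoch n a b \<eta> \<sigma> x = fold (\<lambda>j y. y - \<eta> * (a (\<sigma> j) * y - b (\<sigma> j))) [0..<n] x"

definition sgd_ss :: "nat \<Rightarrow> (nat \<Rightarrow> real) \<Rightarrow> (nat \<Rightarrow> real) \<Rightarrow> real \<Rightarrow> (nat \<Rightarrow> nat) \<Rightarrow> nat \<Rightarrow> real \<Rightarrow> real" where
  "sgd_ss n a b \<eta> \<sigma> k x0 = (sgd_epoch n a b \<eta> \<sigma> ^^ k) x0"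

definition perm_expect :: "nat \<Rightarrow> ((nat \<Rightarrow> nat) \<Rightarrow> real) \<Rightarrow> real" where
  "perm_expect n g = (\<Sum>\<sigma>\<in>{\<sigma>. \<sigma> permutes {..<n}}. g \<sigma>) / fact n"

end

theory Submission
  imports Defs
begin

text \<open>On quadratics one epoch of incremental steps is the affine map
  \<open>x \<mapsto> x\<^sub>* + c (x - x\<^sub>*) + \<eta>\<^sup>2 R\<^sub>\<sigma>\<close> with \<open>c = \<Prod>(1 - \<eta> a\<^sub>i) \<le> exp (-\<eta> \<lambda> n)\<close> independent of the
  permutation: the first-order drift \<open>-\<eta> \<Sum> f\<^sub>i'(x\<^sub>*)\<close> vanishes at the minimiser, and the
  remainder \<open>R\<^sub>\<sigma>\<close> is bounded by \<open>L\<close> times the partial sums of the \<open>f\<^sub>i'(x\<^sub>*)\<close> along \<open>\<sigma>\<close>.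
  After \<open>k\<close> epochs the error is \<open>c\<^sup>k (x\<^sub>0 - x\<^sub>*)\<close> plus at most \<open>k \<eta>\<^sup>2 R\<^sub>\<sigma>\<close>. The step size makes
  \<open>c\<^sup>k \<le> 1 / (\<surd>n k)\<close>, and a partial sum of \<open>j\<close> draws without replacement from the centred
  population \<open>f\<^sub>i'(x\<^sub>*)\<close> has second moment at most \<open>j G\<^sup>2\<close>.\<close>

lemma permutes_exists_map_pair:
  assumes "u \<in> S" "u' \<in> S" "j \<in> S" "j' \<in> S" "u \<noteq> u'" "j \<noteq> j'"
  shows "\<exists>\<pi>. \<pi> permutes S \<and> \<pi> u = j \<and> \<pi> u' = j'"
proof -
  define \<pi>\<^sub>1 where "\<pi>\<^sub>1 = Transposition.transpose u j"
  define \<pi>\<^sub>2 where "\<pi>\<^sub>2 = Transposition.transpose (\<pi>\<^sub>1 u') j'"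
  have \<pi>\<^sub>1: "\<pi>\<^sub>1 permutes S"
    unfolding \<pi>\<^sub>1_def using assms by (intro permutes_swap_id)
  moreover have "\<pi>\<^sub>2 permutes S"
    unfolding \<pi>\<^sub>2_def using assms permutes_in_image[OF \<pi>\<^sub>1, of u'] by (intro permutes_swap_id) auto
  moreover have "\<pi>\<^sub>1 u' \<noteq> j"
    unfolding \<pi>\<^sub>1_def using assms by (metis transpose_apply_first transpose_eq_imp_eq)
  ultimately show ?thesis
    using assms by (intro exI[of _ "\<pi>\<^sub>2 \<circ> \<pi>\<^sub>1"]) (auto simp: \<pi>\<^sub>1_def \<pi>\<^sub>2_def permutes_compose)
qed

lemma perm_expect_compose_right:
  assumes "\<pi> permutes {..<n}"
  shows "perm_expect n (\<lambda>\<sigma>. h (\<sigma> \<circ> \<pi>)) = perm_expect n h"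
  unfolding perm_expect_def using sum_permutations_compose_right[OF assms, of h] by simp

lemma perm_expect_pair_invariant:
  assumes "u < n" "u' < n" "j < n" "j' < n" "u = u' \<longleftrightarrow> j = j'"
  shows "perm_expect n (\<lambda>\<sigma>. h (\<sigma> u) (\<sigma> u')) = perm_expect n (\<lambda>\<sigma>. h (\<sigma> j) (\<sigma> j'))"
proof -
  obtain \<pi> where \<pi>: "\<pi> permutes {..<n}" "\<pi> u = j" "\<pi> u' = j'"
  proof (cases "u = u'")
    case True
    then show ?thesis
      using that[of "Transposition.transpose u j"] assms permutes_swap_id[of u "{..<n}" j] by auto
  next
    case False
    then show ?thesis
      using that permutes_exists_map_pair[of u "{..<n}" u' j j'] assms by auto
  qed
  show ?thesis
    using perm_expect_compose_right[OF \<pi>(1), of "\<lambda>\<sigma>. h (\<sigma> u) (\<sigma> u')"] \<pi> by simp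
qed

lemma perm_expect_sum:
  "perm_expect n (\<lambda>\<sigma>. \<Sum>j\<in>A. f j \<sigma>) = (\<Sum>j\<in>A. perm_expect n (f j))"
  unfolding perm_expect_def by (subst sum.swap) (simp add: sum_divide_distrib)

lemma perm_expect_affine:
  "perm_expect n (\<lambda>\<sigma>. c + d * f \<sigma>) = c + d * perm_expect n f"
proof -
  have "card {\<sigma>. \<sigma> permutes {..<n}} = fact n"
    using card_permutations[of "{..<n}" n] by simp
  then show ?thesis
    unfolding perm_expect_def by (simp add: sum.distrib sum_distrib_left add_divide_distrib)
qed

lemma perm_expect_mono:
  assumes "\<And>\<sigma>. \<sigma> permutes {..<n} \<Longrightarrow> f \<sigma> \<le> g \<sigma>"
  shows "perm_expect n f \<le> perm_expect n g"
  unfolding perm_expect_def using assms by (intro divide_right_mono sum_mono) auto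

lemma perm_expect_fun_permuted_sum:
  "perm_expect n (\<lambda>\<sigma>. h (\<Sum>j<n. f (\<sigma> j))) = h (\<Sum>l<n. f l)"
proof -
  have "perm_expect n (\<lambda>\<sigma>. h (\<Sum>j<n. f (\<sigma> j))) = perm_expect n (\<lambda>_. h (\<Sum>l<n. f l))"
    unfolding perm_expect_def
    by (rule arg_cong[where f = "\<lambda>s. s / fact n"], rule sum.cong)
      (auto simp: sum.permute[symmetric, simplified comp_def])
  then show ?thesis
    using perm_expect_affine[of n "h (\<Sum>l<n. f l)" 0] by simp
qed

lemma perm_expect_apply:
  assumes "j < n"
  shows "perm_expect n (\<lambda>\<sigma>. f (\<sigma> j)) = (\<Sum>l<n. f l) / n"
proof -
  have "(\<Sum>l<n. f l) = perm_expect n (\<lambda>\<sigma>. \<Sum>i<n. f (\<sigma> i))"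
    using perm_expect_fun_permuted_sum[of n id f] by simp
  also have "\<dots> = (\<Sum>i<n. perm_expect n (\<lambda>\<sigma>. f (\<sigma> i)))"
    by (rule perm_expect_sum)
  also have "\<dots> = (\<Sum>i<n. perm_expect n (\<lambda>\<sigma>. f (\<sigma> j)))"
  proof (rule sum.cong)
    fix i assume "i \<in> {..<n}"
    then have "Transposition.transpose i j permutes {..<n}"
      using assms by (intro permutes_swap_id) auto
    from perm_expect_compose_right[OF this, of "\<lambda>\<sigma>. f (\<sigma> j)"]
    show "perm_expect n (\<lambda>\<sigma>. f (\<sigma> i)) = perm_expect n (\<lambda>\<sigma>. f (\<sigma> j))"
      by simp
  qed simp
  finally show ?thesis
    using assms by simp
qed

lemma perm_expect_prefix_sum_sq_eq:
  fixes f :: "nat \<Rightarrow> real"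
  assumes "m \<le> n" "2 \<le> n"
  defines "\<tau> \<equiv> perm_expect n (\<lambda>\<sigma>. f (\<sigma> 0) * f (\<sigma> 1))"
  shows "perm_expect n (\<lambda>\<sigma>. (\<Sum>j<m. f (\<sigma> j))\<^sup>2)
           = m * (\<Sum>l<n. (f l)\<^sup>2) / n + real m * (real m - 1) * \<tau>"
proof -
  have row: "(\<Sum>j'<m. perm_expect n (\<lambda>\<sigma>. f (\<sigma> j) * f (\<sigma> j')))
               = (\<Sum>l<n. (f l)\<^sup>2) / n + (real m - 1) * \<tau>" if "j < m" for j
  proof -
    have off: "perm_expect n (\<lambda>\<sigma>. f (\<sigma> j) * f (\<sigma> j')) = \<tau>" if "j' \<in> {..<m} - {j}" for j'
      unfolding \<tau>_def using that \<open>j < m\<close> assms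
      by (intro perm_expect_pair_invariant) auto
    have "(\<Sum>j'<m. perm_expect n (\<lambda>\<sigma>. f (\<sigma> j) * f (\<sigma> j')))
            = perm_expect n (\<lambda>\<sigma>. (f (\<sigma> j))\<^sup>2)
              + (\<Sum>j'\<in>{..<m} - {j}. perm_expect n (\<lambda>\<sigma>. f (\<sigma> j) * f (\<sigma> j')))"
      using that by (simp add: sum.remove power2_eq_square)
    also have "\<dots> = (\<Sum>l<n. (f l)\<^sup>2) / n + (real m - 1) * \<tau>"
      using that assms by (simp add: off perm_expect_apply[of j n "\<lambda>x. (f x)\<^sup>2"] of_nat_diff)
    finally show ?thesis .
  qed
  have "perm_expect n (\<lambda>\<sigma>. (\<Sum>j<m. f (\<sigma> j))\<^sup>2)
          = (\<Sum>j<m. \<Sum>j'<m. perm_expect n (\<lambda>\<sigma>. f (\<sigma> j) * f (\<sigma> j')))"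
    by (simp add: power2_eq_square sum_product perm_expect_sum)
  also have "\<dots> = m * ((\<Sum>l<n. (f l)\<^sup>2) / n + (real m - 1) * \<tau>)"
    by (simp add: row)
  finally show ?thesis
    by (simp add: algebra_simps)
qed

text \<open>The finite-population correction \<open>(n - m) / (n - 1)\<close> of sampling without replacement.\<close>

lemma perm_expect_prefix_sum_sq:
  fixes f :: "nat \<Rightarrow> real"
  assumes "m \<le> n" "2 \<le> n" "(\<Sum>l<n. f l) = 0"
  shows "perm_expect n (\<lambda>\<sigma>. (\<Sum>j<m. f (\<sigma> j))\<^sup>2)
           = m * (real n - m) / (n * (real n - 1)) * (\<Sum>l<n. (f l)\<^sup>2)"
proof -
  define \<tau> where "\<tau> = perm_expect n (\<lambda>\<sigma>. f (\<sigma> 0) * f (\<sigma> 1))"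
  have "0 = perm_expect n (\<lambda>\<sigma>. (\<Sum>j<n. f (\<sigma> j))\<^sup>2)"
    using perm_expect_fun_permuted_sum[of n power2 f] assms(3) by simp
  also have "\<dots> = (\<Sum>l<n. (f l)\<^sup>2) + n * (real n - 1) * \<tau>"
    using perm_expect_prefix_sum_sq_eq[of n n f] assms by (simp add: \<tau>_def)
  finally have \<tau>: "\<tau> = - (\<Sum>l<n. (f l)\<^sup>2) / (n * (real n - 1))"
    using assms by (simp add: field_simps)
  have "perm_expect n (\<lambda>\<sigma>. (\<Sum>j<m. f (\<sigma> j))\<^sup>2)
          = m * (\<Sum>l<n. (f l)\<^sup>2) / n + real m * (real m - 1) * \<tau>"
    unfolding \<tau>_def by (rule perm_expect_prefix_sum_sq_eq[OF assms(1,2)])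
  with assms show ?thesis
    unfolding \<tau> by (simp add: field_simps)
qed

lemma perm_expect_prefix_sum_sq_le:
  fixes f :: "nat \<Rightarrow> real"
  assumes "m \<le> n" "2 \<le> n" "(\<Sum>l<n. f l) = 0" "\<forall>l<n. \<bar>f l\<bar> \<le> G"
  shows "perm_expect n (\<lambda>\<sigma>. (\<Sum>j<m. f (\<sigma> j))\<^sup>2) \<le> m * G\<^sup>2"
proof -
  define c where "c = m * (real n - m) / (n * (real n - 1))"
  have c: "0 \<le> c" "c * n \<le> m"
  proof -
    show "0 \<le> c"
      using assms(1,2) by (simp add: c_def)
    have "c * n = m * ((real n - m) / (real n - 1))"
      using assms(2) by (simp add: c_def)
    also have "\<dots> \<le> m"
    proof (cases "m = 0")
      case False
      then have "(real n - m) / (real n - 1) \<le> 1"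
        using assms(2) by simp
      then show ?thesis
        by (rule mult_left_le) simp
    qed simp
    finally show "c * n \<le> m" .
  qed
  have "(\<Sum>l<n. (f l)\<^sup>2) \<le> (\<Sum>l<n. G\<^sup>2)"
    using assms(4) by (intro sum_mono) (auto simp: abs_le_square_iff [symmetric])
  then have "c * (\<Sum>l<n. (f l)\<^sup>2) \<le> c * (n * G\<^sup>2)"
    using c(1) by (intro mult_left_mono) simp_all
  also have "\<dots> = (c * n) * G\<^sup>2"
    by simp
  also have "\<dots> \<le> m * G\<^sup>2"
    using c(2) by (simp add: mult_right_mono)
  finally show ?thesis
    unfolding perm_expect_prefix_sum_sq[OF assms(1-3)] c_def .
qed

lemma perm_expect_sum_prefix_sum_sq_le:
  fixes f :: "nat \<Rightarrow> real"
  assumes "2 \<le> n" "(\<Sum>l<n. f l) = 0" "\<forall>l<n. \<bar>f l\<bar> \<le> G"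
  shows "perm_expect n (\<lambda>\<sigma>. \<Sum>j<n. (\<Sum>i<j. f (\<sigma> i))\<^sup>2) \<le> real n * n * G\<^sup>2"
proof -
  have "perm_expect n (\<lambda>\<sigma>. \<Sum>j<n. (\<Sum>i<j. f (\<sigma> i))\<^sup>2)
          = (\<Sum>j<n. perm_expect n (\<lambda>\<sigma>. (\<Sum>i<j. f (\<sigma> i))\<^sup>2))"
    by (rule perm_expect_sum)
  also have "\<dots> \<le> (\<Sum>j<n. n * G\<^sup>2)"
  proof (rule sum_mono)
    fix j assume j: "j \<in> {..<n}"
    then have "perm_expect n (\<lambda>\<sigma>. (\<Sum>i<j. f (\<sigma> i))\<^sup>2) \<le> j * G\<^sup>2"
      using assms by (intro perm_expect_prefix_sum_sq_le) auto
    also have "\<dots> \<le> n * G\<^sup>2"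
      using j by (intro mult_right_mono) auto
    finally show "perm_expect n (\<lambda>\<sigma>. (\<Sum>i<j. f (\<sigma> i))\<^sup>2) \<le> n * G\<^sup>2" .
  qed
  finally show ?thesis
    by simp
qed

text \<open>Second-order remainder of the expansion of \<open>m\<close> incremental steps around \<open>x\<^sub>*\<close>;
  \<open>g i\<close> plays the role of \<open>f\<^sub>i'(x\<^sub>*)\<close>.\<close>

primrec epoch_remainder :: "(nat \<Rightarrow> real) \<Rightarrow> (nat \<Rightarrow> real) \<Rightarrow> real \<Rightarrow> (nat \<Rightarrow> nat) \<Rightarrow> nat \<Rightarrow> real" where
  "epoch_remainder a g \<eta> \<sigma> 0 = 0"
| "epoch_remainder a g \<eta> \<sigma> (Suc m) =
     a (\<sigma> m) * (\<Sum>j<m. g (\<sigma> j)) + (1 - \<eta> * a (\<sigma> m)) * epoch_remainder a g \<eta> \<sigma> m"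

lemma fold_sgd_step_expansion:
  "fold (\<lambda>j y. y - \<eta> * (a (\<sigma> j) * y - b (\<sigma> j))) [0..<m] x
     = xs + (\<Prod>j<m. 1 - \<eta> * a (\<sigma> j)) * (x - xs) - \<eta> * (\<Sum>j<m. a (\<sigma> j) * xs - b (\<sigma> j))
       + \<eta>\<^sup>2 * epoch_remainder a (\<lambda>i. a i * xs - b i) \<eta> \<sigma> m"
proof (induction m)
  case 0
  then show ?case by simp
next
  case (Suc m)
  define y where "y = fold (\<lambda>j y. y - \<eta> * (a (\<sigma> j) * y - b (\<sigma> j))) [0..<m] x"
  have "fold (\<lambda>j y. y - \<eta> * (a (\<sigma> j) * y - b (\<sigma> j))) [0..<Suc m] x = y - \<eta> * (a (\<sigma> m) * y - b (\<sigma> m))"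
    by (simp add: y_def)
  then show ?case
    unfolding Suc.IH[folded y_def] by (simp add: algebra_simps power2_eq_square)
qed

lemma epoch_remainder_abs_le:
  assumes "\<forall>j<m. 0 \<le> a (\<sigma> j) \<and> a (\<sigma> j) \<le> L" "0 \<le> \<eta>" "\<eta> * L \<le> 1"
  shows "\<bar>epoch_remainder a g \<eta> \<sigma> m\<bar> \<le> L * (\<Sum>j<m. \<bar>\<Sum>i<j. g (\<sigma> i)\<bar>)"
  using assms(1)
proof (induction m)
  case 0
  then show ?case by simp
next
  case (Suc m)
  then have a: "0 \<le> a (\<sigma> m)" "a (\<sigma> m) \<le> L"
    by auto
  have "\<eta> * a (\<sigma> m) \<le> \<eta> * L"
    using a(2) assms(2) by (rule mult_left_mono)
  then have "\<bar>1 - \<eta> * a (\<sigma> m)\<bar> \<le> 1"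
    using a(1) assms(2,3) by auto
  then have "\<bar>(1 - \<eta> * a (\<sigma> m)) * epoch_remainder a g \<eta> \<sigma> m\<bar> \<le> \<bar>epoch_remainder a g \<eta> \<sigma> m\<bar>"
    by (simp add: abs_mult mult_left_le_one_le)
  moreover have "\<bar>a (\<sigma> m) * (\<Sum>j<m. g (\<sigma> j))\<bar> \<le> L * \<bar>\<Sum>j<m. g (\<sigma> j)\<bar>"
    unfolding abs_mult using a by (intro mult_right_mono) auto
  moreover have "\<bar>epoch_remainder a g \<eta> \<sigma> m\<bar> \<le> L * (\<Sum>j<m. \<bar>\<Sum>i<j. g (\<sigma> i)\<bar>)"
    using Suc by auto
  ultimately show ?case
    by (simp add: algebra_simps)
qed

lemma sgd_epoch_expansion:
  assumes "\<sigma> permutes {..<n}" "(\<Sum>i<n. a i * xs - b i) = 0"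
  shows "sgd_epoch n a b \<eta> \<sigma> x
           = xs + (\<Prod>i<n. 1 - \<eta> * a i) * (x - xs) + \<eta>\<^sup>2 * epoch_remainder a (\<lambda>i. a i * xs - b i) \<eta> \<sigma> n"
proof -
  have "(\<Prod>j<n. 1 - \<eta> * a (\<sigma> j)) = (\<Prod>i<n. 1 - \<eta> * a i)"
    using prod.permute[OF assms(1), of "\<lambda>i. 1 - \<eta> * a i"] by simp
  moreover have "(\<Sum>j<n. a (\<sigma> j) * xs - b (\<sigma> j)) = 0"
    using sum.permute[OF assms(1), of "\<lambda>i. a i * xs - b i"] assms(2) by simp
  ultimately show ?thesis
    unfolding sgd_epoch_def fold_sgd_step_expansion[where xs = xs] by simp
qed

lemma funpow_affine:
  fixes c d x\<^sub>0 :: real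
  assumes "\<And>x. f x = x\<^sub>0 + c * (x - x\<^sub>0) + d"
  shows "(f ^^ t) x = x\<^sub>0 + c ^ t * (x - x\<^sub>0) + (\<Sum>s<t. c ^ s) * d"
proof (induction t)
  case 0
  then show ?case by simp
next
  case (Suc t)
  have "(f ^^ Suc t) x = x\<^sub>0 + c * ((f ^^ t) x - x\<^sub>0) + d"
    using assms by simp
  also have "\<dots> = x\<^sub>0 + c * (c ^ t * (x - x\<^sub>0) + (\<Sum>s<t. c ^ s) * d) + d"
    unfolding Suc.IH by simp
  also have "\<dots> = x\<^sub>0 + c ^ Suc t * (x - x\<^sub>0) + (1 + c * (\<Sum>s<t. c ^ s)) * d"
    by (simp add: algebra_simps)
  also have "1 + c * (\<Sum>s<t. c ^ s) = (\<Sum>s<Suc t. c ^ s)"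
    by (simp only: sum.lessThan_Suc_shift power_Suc sum_distrib_left power_0)
  finally show ?case .
qed

lemma prod_one_minus_le_exp:
  fixes x :: "'a \<Rightarrow> real"
  assumes "\<And>i. i \<in> I \<Longrightarrow> 0 \<le> x i \<and> x i \<le> 1"
  shows "0 \<le> (\<Prod>i\<in>I. 1 - x i)" "(\<Prod>i\<in>I. 1 - x i) \<le> exp (- (\<Sum>i\<in>I. x i))"
proof -
  show "0 \<le> (\<Prod>i\<in>I. 1 - x i)"
    using assms by (intro prod_nonneg) auto
  have "(\<Prod>i\<in>I. 1 - x i) \<le> (\<Prod>i\<in>I. exp (- x i))"
  proof (intro prod_mono conjI)
    fix i assume "i \<in> I"
    then show "0 \<le> 1 - x i"
      using assms by simp
    show "1 - x i \<le> exp (- x i)"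
      using exp_ge_add_one_self[of "- x i"] by simp
  qed
  then show "(\<Prod>i\<in>I. 1 - x i) \<le> exp (- (\<Sum>i\<in>I. x i))"
    using exp_sum[of I "\<lambda>i. - x i"] by (cases "finite I") (simp_all add: sum_negf)
qed

lemma F_obj_quadratic:
  assumes "0 < n"
  shows "F_obj n a b x = (\<Sum>i<n. a i) / n / 2 * x\<^sup>2 - (\<Sum>i<n. b i) / n * x"
proof -
  have "F_obj n a b x = 1 / n * ((\<Sum>i<n. a i) / 2 * x\<^sup>2 - (\<Sum>i<n. b i) * x)"
    unfolding F_obj_def by (simp add: sum_subtractf sum_distrib_right sum_divide_distrib)
  then show ?thesis
    using assms by (simp add: field_simps)
qed

lemma F_obj_minimizer_gradient:
  assumes "0 < (\<Sum>i<n. a i) / n" "\<forall>x. F_obj n a b xs \<le> F_obj n a b x"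
  shows "(\<Sum>i<n. a i * xs - b i) = 0"
proof -
  define lam where "lam = (\<Sum>i<n. a i) / n"
  define \<beta> where "\<beta> = (\<Sum>i<n. b i) / n"
  have n: "0 < n"
    using assms(1) by (cases n) simp_all
  have "(lam * xs - \<beta>)\<^sup>2 = 2 * lam * (F_obj n a b xs - F_obj n a b (\<beta> / lam))"
    using assms(1) unfolding F_obj_quadratic[OF n] lam_def [symmetric] \<beta>_def [symmetric]
    by (simp add: field_simps power2_eq_square)
  also have "\<dots> \<le> 0"
    using assms(1) assms(2)[rule_format, of "\<beta> / lam"]
    unfolding lam_def [symmetric] by (intro mult_nonneg_nonpos) auto
  finally have "lam * xs = \<beta>"
    by simp
  then show ?thesis
    using n by (simp add: lam_def \<beta>_def sum_subtractf sum_distrib_left field_simps)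
qed

lemma F_obj_excess:
  assumes "0 < n" "(\<Sum>i<n. a i * xs - b i) = 0"
  shows "F_obj n a b x - F_obj n a b xs = (\<Sum>i<n. a i) / n / 2 * (x - xs)\<^sup>2"
proof -
  define lam where "lam = (\<Sum>i<n. a i) / n"
  have "(\<Sum>i<n. b i) = (\<Sum>i<n. a i) * xs"
    using assms(2) by (simp add: sum_subtractf sum_distrib_right)
  then have "(\<Sum>i<n. b i) / n = lam * xs"
    by (simp add: lam_def)
  then show ?thesis
    unfolding F_obj_quadratic[OF assms(1)] lam_def [symmetric]
    by (simp add: algebra_simps power2_eq_square)
qed

lemma sgd_ss_sq_dist_le:
  fixes \<eta> L :: real
  assumes \<sigma>: "\<sigma> permutes {..<n}" and a: "\<forall>i<n. 0 \<le> a i \<and> a i \<le> L"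
    and \<eta>: "0 \<le> \<eta>" "\<eta> * L \<le> 1" and grad: "(\<Sum>i<n. a i * xs - b i) = 0"
  shows "(sgd_ss n a b \<eta> \<sigma> k x\<^sub>0 - xs)\<^sup>2
           \<le> 2 * ((\<Prod>i<n. 1 - \<eta> * a i) ^ k)\<^sup>2 * (x\<^sub>0 - xs)\<^sup>2
             + 2 * (real k)\<^sup>2 * \<eta> ^ 4 * L\<^sup>2 * n * (\<Sum>j<n. (\<Sum>i<j. a (\<sigma> i) * xs - b (\<sigma> i))\<^sup>2)"
proof -
  define g where "g i = a i * xs - b i" for i
  define c where "c = (\<Prod>i<n. 1 - \<eta> * a i)"
  define A where "A = (\<Sum>s<k. c ^ s)"
  define R where "R = epoch_remainder a g \<eta> \<sigma> n"
  define Q where "Q = (\<Sum>j<n. (\<Sum>i<j. g (\<sigma> i))\<^sup>2)"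
  have sq: "(u + v)\<^sup>2 \<le> 2 * u\<^sup>2 + 2 * v\<^sup>2" for u v :: real
    using sum_squares_bound[of u v] by (simp add: power2_sum)
  have step: "0 \<le> 1 - \<eta> * a i \<and> 1 - \<eta> * a i \<le> 1" if "i < n" for i
    using a that \<eta> mult_left_mono[of "a i" L \<eta>] by auto
  have c: "0 \<le> c" "c \<le> 1"
    unfolding c_def using step by (auto intro: prod_nonneg prod_le_1)
  have A: "0 \<le> A" "A \<le> k"
    using sum_mono[of "{..<k}" "\<lambda>s. c ^ s" "\<lambda>_. 1"] c
    by (auto simp: A_def power_le_one intro: sum_nonneg)
  have remainder: "A\<^sup>2 * \<eta> ^ 4 * R\<^sup>2 \<le> (real k)\<^sup>2 * \<eta> ^ 4 * (L\<^sup>2 * (n * Q))"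
  proof (intro mult_mono)
    have "\<bar>R\<bar> \<le> L * (\<Sum>j<n. \<bar>\<Sum>i<j. g (\<sigma> i)\<bar>)"
      unfolding R_def using a permutes_in_image[OF \<sigma>] \<eta> by (intro epoch_remainder_abs_le) auto
    then have "\<bar>R\<bar> \<le> \<bar>L * (\<Sum>j<n. \<bar>\<Sum>i<j. g (\<sigma> i)\<bar>)\<bar>"
      by linarith
    then have "R\<^sup>2 \<le> L\<^sup>2 * (\<Sum>j<n. \<bar>\<Sum>i<j. g (\<sigma> i)\<bar>)\<^sup>2"
      unfolding abs_le_square_iff by (simp add: power_mult_distrib)
    also have "(\<Sum>j<n. \<bar>\<Sum>i<j. g (\<sigma> i)\<bar>)\<^sup>2 \<le> n * Q"
      using Cauchy_Schwarz_ineq_sum[of "\<lambda>_. 1" "\<lambda>j. \<bar>\<Sum>i<j. g (\<sigma> i)\<bar>" "{..<n}"]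
      unfolding Q_def by simp
    finally show "R\<^sup>2 \<le> L\<^sup>2 * (n * Q)"
      by (simp add: mult_left_mono)
  qed (use A in \<open>auto intro: power_mono\<close>)
  have "sgd_ss n a b \<eta> \<sigma> k x\<^sub>0 = xs + c ^ k * (x\<^sub>0 - xs) + A * (\<eta>\<^sup>2 * R)"
    unfolding sgd_ss_def A_def c_def R_def g_def
    by (rule funpow_affine) (rule sgd_epoch_expansion[OF \<sigma> grad])
  then have "(sgd_ss n a b \<eta> \<sigma> k x\<^sub>0 - xs)\<^sup>2 = (c ^ k * (x\<^sub>0 - xs) + A * \<eta>\<^sup>2 * R)\<^sup>2"
    by (simp add: mult.assoc)
  also have "\<dots> \<le> 2 * (c ^ k)\<^sup>2 * (x\<^sub>0 - xs)\<^sup>2 + 2 * A\<^sup>2 * \<eta> ^ 4 * R\<^sup>2"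
    using sq[of "c ^ k * (x\<^sub>0 - xs)" "A * \<eta>\<^sup>2 * R"]
    by (simp add: power_mult_distrib mult_ac flip: power_mult)
  also have "\<dots> \<le> 2 * (c ^ k)\<^sup>2 * (x\<^sub>0 - xs)\<^sup>2 + 2 * ((real k)\<^sup>2 * \<eta> ^ 4 * (L\<^sup>2 * (n * Q)))"
    using remainder by linarith
  finally show ?thesis
    unfolding c_def Q_def g_def by (simp add: algebra_simps)
qed

lemma contraction_pow_sq_le:
  fixes \<eta> lam :: real and n k :: nat
  assumes step: "\<forall>i<n. 0 \<le> \<eta> * a i \<and> \<eta> * a i \<le> 1" and mean: "(\<Sum>i<n. a i) / n = lam"
    and n: "0 < n" and \<eta>: "\<eta> * lam * n * k = ln (sqrt n * k)" and nk: "1 < sqrt n * k"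
  shows "((\<Prod>i<n. 1 - \<eta> * a i) ^ k)\<^sup>2 \<le> 1 / (n * (real k)\<^sup>2)"
proof -
  define c where "c = (\<Prod>i<n. 1 - \<eta> * a i)"
  have c: "0 \<le> c"
    unfolding c_def using step by (intro prod_one_minus_le_exp) simp
  have "c \<le> exp (- (\<Sum>i<n. \<eta> * a i))"
    unfolding c_def using step by (intro prod_one_minus_le_exp) simp
  also have "(\<Sum>i<n. \<eta> * a i) = \<eta> * lam * n"
    using mean n by (simp add: sum_distrib_left [symmetric] field_simps)
  finally have "c ^ k \<le> exp (- (\<eta> * lam * n)) ^ k"
    using c by (intro power_mono)
  also have "\<dots> = exp (real k * - (\<eta> * lam * n))"
    by (rule exp_of_nat_mult [symmetric])
  also have "real k * - (\<eta> * lam * n) = - ln (sqrt n * k)"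
    using \<eta> by (simp add: algebra_simps)
  also have "exp (- ln (sqrt n * k)) = 1 / (sqrt n * k)"
    using nk by (simp add: exp_minus inverse_eq_divide)
  finally have "(c ^ k)\<^sup>2 \<le> (1 / (sqrt n * k))\<^sup>2"
    using c by (intro power_mono) auto
  then show ?thesis
    unfolding c_def by (simp add: power_divide power_mult_distrib)
qed

lemma step_size_bounds:
  fixes n k :: nat and lam L :: real
  assumes n: "2 \<le> n" and k: "1 \<le> k" and lam: "0 < lam"
    and L: "L / lam \<le> real n * real k / ln (sqrt n * k)"
  defines "\<eta> \<equiv> ln (sqrt n * k) / (lam * n * k)"
  shows "1 < sqrt n * k" "0 < \<eta>" "\<eta> * L \<le> 1" "\<eta> * lam * n * k = ln (sqrt n * k)"
proof -
  have "1 < sqrt n" "sqrt n \<le> sqrt n * k"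
    using n k by auto
  then show "1 < sqrt n * k"
    by linarith
  then have l: "0 < ln (sqrt n * k)"
    by simp
  have pos: "0 < lam * n * k"
    using lam n k by simp
  have "L * ln (sqrt n * k) \<le> lam * n * k"
    using L lam l by (simp add: field_simps)
  then show "0 < \<eta>" "\<eta> * L \<le> 1" "\<eta> * lam * n * k = ln (sqrt n * k)"
    unfolding \<eta>_def using l pos lam by (simp_all add: field_simps)
qed

lemma sgd_ss_expected_excess_le:
  fixes n k :: nat and lam L G x\<^sub>0 xs :: real
  assumes n: "2 \<le> n" and k: "1 \<le> k" and lam: "0 < lam"
    and a: "\<forall>i<n. 0 \<le> a i \<and> a i \<le> L" and mean: "(\<Sum>i<n. a i) / n = lam"
    and xs: "\<forall>x. F_obj n a b xs \<le> F_obj n a b x" and G: "\<forall>i<n. \<bar>a i * xs - b i\<bar> \<le> G"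
    and L: "L / lam \<le> real n * real k / ln (sqrt n * k)"
  defines "\<eta> \<equiv> ln (sqrt n * k) / (lam * n * k)"
  shows "perm_expect n (\<lambda>\<sigma>. F_obj n a b (sgd_ss n a b \<eta> \<sigma> k x\<^sub>0) - (INF x. F_obj n a b x))
           \<le> lam / (n * (real k)\<^sup>2) * (x\<^sub>0 - xs)\<^sup>2
             + ln (sqrt n * k) ^ 4 * (G\<^sup>2 * L\<^sup>2 / (lam ^ 3 * n * (real k)\<^sup>2))"
proof -
  define l where "l = ln (sqrt n * k)"
  define c where "c = (\<Prod>i<n. 1 - \<eta> * a i)"
  define Q where "Q \<sigma> = (\<Sum>j<n. (\<Sum>i<j. a (\<sigma> i) * xs - b (\<sigma> i))\<^sup>2)" for \<sigma>
  have nk: "1 < sqrt n * k" and \<eta>: "0 < \<eta>" "\<eta> * L \<le> 1" "\<eta> * lam * n * k = l"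
    using step_size_bounds[OF n k lam L] unfolding \<eta>_def l_def by auto
  have grad: "(\<Sum>i<n. a i * xs - b i) = 0"
    using xs mean lam by (intro F_obj_minimizer_gradient) simp_all
  have excess: "F_obj n a b x - (INF x. F_obj n a b x) = lam / 2 * (x - xs)\<^sup>2" for x
  proof -
    have "(INF x. F_obj n a b x) = F_obj n a b xs"
      using xs by (intro cInf_eq_minimum) auto
    then show ?thesis
      using F_obj_excess[OF _ grad, of x] n mean by simp
  qed
  have step: "0 \<le> \<eta> * a i \<and> \<eta> * a i \<le> 1" if "i < n" for i
  proof -
    have "0 \<le> \<eta> * a i"
      using a that \<eta>(1) by simp
    moreover have "\<eta> * a i \<le> \<eta> * L"
      using a that \<eta>(1) by (intro mult_left_mono) auto
    ultimately show ?thesis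
      using \<eta>(2) by linarith
  qed
  have contraction: "(c ^ k)\<^sup>2 \<le> 1 / (n * (real k)\<^sup>2)"
    unfolding c_def using step mean n \<eta>(3) nk unfolding l_def
    by (intro contraction_pow_sq_le) auto
  have pointwise: "F_obj n a b (sgd_ss n a b \<eta> \<sigma> k x\<^sub>0) - (INF x. F_obj n a b x)
                     \<le> lam / (n * (real k)\<^sup>2) * (x\<^sub>0 - xs)\<^sup>2 + lam * (real k)\<^sup>2 * \<eta> ^ 4 * L\<^sup>2 * n * Q \<sigma>"
    if "\<sigma> permutes {..<n}" for \<sigma>
  proof -
    have "F_obj n a b (sgd_ss n a b \<eta> \<sigma> k x\<^sub>0) - (INF x. F_obj n a b x)
            = lam / 2 * (sgd_ss n a b \<eta> \<sigma> k x\<^sub>0 - xs)\<^sup>2"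
      by (rule excess)
    also have "\<dots> \<le> lam / 2 * (2 * (c ^ k)\<^sup>2 * (x\<^sub>0 - xs)\<^sup>2 + 2 * (real k)\<^sup>2 * \<eta> ^ 4 * L\<^sup>2 * n * Q \<sigma>)"
      unfolding c_def Q_def using lam \<eta>(1,2)
      by (intro mult_left_mono sgd_ss_sq_dist_le[OF that a _ _ grad]) simp_all
    also have "\<dots> \<le> lam / (n * (real k)\<^sup>2) * (x\<^sub>0 - xs)\<^sup>2 + lam * (real k)\<^sup>2 * \<eta> ^ 4 * L\<^sup>2 * n * Q \<sigma>"
      using mult_right_mono[OF contraction, of "lam * (x\<^sub>0 - xs)\<^sup>2"] lam
      by (simp add: algebra_simps)
    finally show ?thesis .
  qed
  have moment: "perm_expect n Q \<le> real n * n * G\<^sup>2"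
    unfolding Q_def using n grad G by (intro perm_expect_sum_prefix_sum_sq_le) auto
  define Y where "Y = lam * (real k)\<^sup>2 * \<eta> ^ 4 * L\<^sup>2 * n"
  have "perm_expect n (\<lambda>\<sigma>. F_obj n a b (sgd_ss n a b \<eta> \<sigma> k x\<^sub>0) - (INF x. F_obj n a b x))
          \<le> perm_expect n (\<lambda>\<sigma>. lam / (n * (real k)\<^sup>2) * (x\<^sub>0 - xs)\<^sup>2 + Y * Q \<sigma>)"
    unfolding Y_def by (intro perm_expect_mono pointwise)
  also have "\<dots> \<le> lam / (n * (real k)\<^sup>2) * (x\<^sub>0 - xs)\<^sup>2 + Y * (real n * n * G\<^sup>2)"
    unfolding perm_expect_affine using moment lam \<eta>(1) by (simp add: Y_def mult_left_mono)
  also have "Y * (real n * n * G\<^sup>2) = l ^ 4 * (G\<^sup>2 * L\<^sup>2 / (lam ^ 3 * n * (real k)\<^sup>2))"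
  proof -
    have \<eta>_eq: "\<eta> = l / (lam * n * k)"
      unfolding \<eta>_def l_def ..
    have "0 < real n" "0 < real k"
      using n k by simp_all
    then show ?thesis
      unfolding Y_def \<eta>_eq using lam
      by (simp add: field_simps power_mult_distrib power_divide power2_eq_square power4_eq_xxxx
          power3_eq_cube)
  qed
  finally show ?thesis
    unfolding l_def .
qed

lemma ln_sqrt_mult_pow4_le:
  fixes n k :: nat
  assumes "1 \<le> n" "1 \<le> k"
  shows "ln (sqrt n * k) ^ 4 \<le> (1 + ln (real n * real k)) powr 4" "1 \<le> (1 + ln (real n * real k)) powr 4"
proof -
  have nk: "1 \<le> real n" "1 \<le> real k"
    using assms by simp_all
  then have sqrt: "1 \<le> sqrt n" "sqrt n \<le> n"
    using real_sqrt_le_mono[of 1 n] mult_left_mono[of 1 "sqrt n" "sqrt n"] by simp_all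
  have "1 \<le> real n * k" "1 \<le> sqrt n * k"
    using mult_mono[OF nk] mult_mono[OF sqrt(1) nk(2)] by simp_all
  moreover have "sqrt n * k \<le> real n * k"
    using sqrt(2) by (simp add: mult_right_mono)
  ultimately have l: "0 \<le> ln (sqrt n * k)" "ln (sqrt n * k) \<le> ln (real n * real k)" "0 \<le> ln (real n * real k)"
    by auto
  then show "ln (sqrt n * k) ^ 4 \<le> (1 + ln (real n * real k)) powr 4"
    by (simp add: power_mono powr_realpow)
  show "1 \<le> (1 + ln (real n * real k)) powr 4"
    using l(3) by (simp add: powr_realpow one_le_power)
qed

theorem theorem4:
  "\<exists>C p::real. C > 0 \<and> p \<ge> 0 \<and>
    (\<forall>(n::nat) (k::nat) (a::nat \<Rightarrow> real) (b::nat \<Rightarrow> real) (lam::real) (L::real) (G::real) (x0::real) (xs::real).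
      n \<ge> 2 \<longrightarrow> k \<ge> 1 \<longrightarrow> lam > 0 \<longrightarrow> L > 0 \<longrightarrow> G > 0 \<longrightarrow>
      (\<forall>i<n. 0 \<le> a i \<and> a i \<le> L) \<longrightarrow>
      (\<Sum>i<n. a i) / real n = lam \<longrightarrow>
      (\<forall>x. F_obj n a b xs \<le> F_obj n a b x) \<longrightarrow>
      (\<forall>i<n. \<bar>a i * xs - b i\<bar> \<le> G) \<longrightarrow>
      L / lam \<le> real n * real k / ln (sqrt (real n) * real k) \<longrightarrow>
      (let \<eta> = ln (sqrt (real n) * real k) / (lam * real n * real k) in
        perm_expect n (\<lambda>\<sigma>. F_obj n a b (sgd_ss n a b \<eta> \<sigma> k x0) - (INF x. F_obj n a b x))
        \<le> C * (1 + ln (real n * real k)) powr p *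
            (lam / (real n * real k^2) * (x0 - xs)^2
             + G^2 * L^2 / (lam^3 * real n * real k^2))))"
  apply (rule exI[of _ 1], rule exI[of _ 4], intro conjI allI impI)
    subgoal by simp
   subgoal by simp
  subgoal premises hyps for n k a b lam L G x0 xs
  proof -
    define M where "M = (1 + ln (real n * real k)) powr 4"
    define X where "X = lam / (real n * (real k)\<^sup>2) * (x0 - xs)\<^sup>2"
    define Y where "Y = G\<^sup>2 * L\<^sup>2 / (lam ^ 3 * n * (real k)\<^sup>2)"
    have XY: "0 \<le> X" "0 \<le> Y"
      using hyps(3) by (simp_all add: X_def Y_def)
    have M: "ln (sqrt n * k) ^ 4 \<le> M" "1 \<le> M"
      unfolding M_def using ln_sqrt_mult_pow4_le[of n k] hyps(1,2) by simp_all
    have "perm_expect n (\<lambda>\<sigma>. F_obj n a b (sgd_ss n a b (ln (sqrt n * k) / (lam * n * k)) \<sigma> k x0)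
            - (INF x. F_obj n a b x)) \<le> X + ln (sqrt n * k) ^ 4 * Y"
      unfolding X_def Y_def by (rule sgd_ss_expected_excess_le[OF hyps(1-3,6-10)])
    also have "\<dots> \<le> 1 * M * (X + Y)"
      using mult_right_mono[OF M(2) XY(1)] mult_right_mono[OF M(1) XY(2)]
      by (simp add: distrib_left)
    finally show ?thesis
      unfolding Let_def M_def X_def Y_def .
  qed
  done

end
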